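(* Let $\mathcal X,\mathcal Y$ be finite-dimensional Hilbert spaces, let $K\subset\mathcal Y$ be a closed convex cone with polar cone $K^{\circ}$, and let $g:\mathcal X\to\mathcal Y$ be a continuous mapping such that the set-valued mapping $\mathcal F_g:x\mapsto K-g(x)$ is graph-convex. Then the function $$\theta(x)=\tfrac12\|\Pi_{K^{\circ}}(g(x))\|^2$$ is convex on $\mathcal X$.
   Context: $\Pi_{C}$ denotes the metric projection onto a closed convex set $C$, and $K^{\circ}=\{v\in\mathcal Y:\langle v,k\rangle\le 0\ \forall k\in K\}$. The mapping $\mathcal F_g:x\mapsto K-g(x)$ is called graph-convex if its graph $\{(x,y)\in\mathcal X\times\mathcal Y: g(x)+y\in K\}$ is a convex set. (One has $\theta(x)=\min_z\{\tfrac12\|z\|^2: g(x)+z\in K\}=\tfrac12\|g(x)-\Pi_K(g(x))\|^2$.) *)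

theory Defs
  imports "HOL-Analysis.Analysis"
begin

definition polar_cone :: "'a::real_inner set \<Rightarrow> 'a set" where
  "polar_cone K = {v. \<forall>k\<in>K. inner v k \<le> 0}"

text \<open>Graph-convexity of the set-valued map x maps to K - g(x):
  its graph is the set of pairs (x,y) with g x + y in K.\<close>
definition graph_convex_map :: "'b::real_vector set \<Rightarrow> ('a::real_vector \<Rightarrow> 'b) \<Rightarrow> bool" where
  "graph_convex_map K g \<longleftrightarrow> convex {(x, y). g x + y \<in> K}"

end

theory Submission
  imports Defs
begin

(* By Moreau's decomposition, the projection of y onto the polar cone is the residual
   y - Pi_K y, so theta(x) is half the squared distance from g x to K. For x1, x2 let zi be
   the shortest vector with g xi + zi in K; graph-convexity puts the convex combination of
   the pairs (xi, zi) into the graph, so the distance from g to K along the segment is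
   bounded by the convex combination of the norms of zi. Hence the distance is convex, and
   so is its square. *)

lemma closed_polar_cone: "closed (polar_cone K)"
proof -
  have "polar_cone K = (\<Inter>k\<in>K. {v. inner v k \<le> 0})"
    unfolding polar_cone_def by auto
  then show ?thesis
    by (auto intro!: closed_INT closed_Collect_le continuous_intros)
qed

lemma convex_polar_cone: "convex (polar_cone K)"
  unfolding polar_cone_def convex_def
  by (auto simp: inner_add_left intro!: add_nonpos_nonpos mult_nonneg_nonpos)

lemma convex_on_power2:
  fixes f :: "'a::real_vector \<Rightarrow> real"
  assumes "convex_on S f" and "\<And>x. x \<in> S \<Longrightarrow> 0 \<le> f x"
  shows "convex_on S (\<lambda>x. (f x)\<^sup>2)"
proof (rule convex_onI)
  show "convex S" using convex_on_imp_convex[OF assms(1)] .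
  fix t :: real and x y
  assume t: "0 < t" "t < 1" and xy: "x \<in> S" "y \<in> S"
  have "(f ((1 - t) *\<^sub>R x + t *\<^sub>R y))\<^sup>2 \<le> ((1 - t) * f x + t * f y)\<^sup>2"
    using convex_onD[OF assms(1), of t x y] t xy assms(2) \<open>convex S\<close>
    by (intro power_mono) (auto simp: convex_def)
  also have "\<dots> \<le> (1 - t) * (f x)\<^sup>2 + t * (f y)\<^sup>2"
    using convex_onD[OF convex_power2, of t "f x" "f y"] t by simp
  finally show "(f ((1 - t) *\<^sub>R x + t *\<^sub>R y))\<^sup>2 \<le> (1 - t) * (f x)\<^sup>2 + t * (f y)\<^sup>2" .
qed

lemma convex_on_dist_closest_point_graph_convex:
  fixes K :: "'b::euclidean_space set" and g :: "'a::real_vector \<Rightarrow> 'b"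
  assumes "closed K" "K \<noteq> {}" "graph_convex_map K g"
  shows "convex_on UNIV (\<lambda>x. dist (g x) (closest_point K (g x)))"
proof (rule convex_onI)
  show "convex (UNIV :: 'a set)" by simp
  fix t :: real and x\<^sub>1 x\<^sub>2 :: 'a
  assume t: "0 < t" "t < 1"
  define z where "z x = closest_point K (g x) - g x" for x
  define x where "x = (1 - t) *\<^sub>R x\<^sub>1 + t *\<^sub>R x\<^sub>2"
  have graph: "convex {(x, y). g x + y \<in> K}"
    using assms(3) unfolding graph_convex_map_def .
  have "(x\<^sub>1, z x\<^sub>1) \<in> {(x, y). g x + y \<in> K}" "(x\<^sub>2, z x\<^sub>2) \<in> {(x, y). g x + y \<in> K}"
    unfolding z_def using closest_point_in_set[OF assms(1,2)] by auto
  from convexD[OF graph this, of "1 - t" t] t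
  have in_K: "g x + ((1 - t) *\<^sub>R z x\<^sub>1 + t *\<^sub>R z x\<^sub>2) \<in> K"
    unfolding x_def by simp
  have "dist (g x) (closest_point K (g x)) \<le> norm ((1 - t) *\<^sub>R z x\<^sub>1 + t *\<^sub>R z x\<^sub>2)"
    using closest_point_le[OF assms(1) in_K, of "g x"]
    by (metis add_diff_cancel_left' dist_commute dist_norm)
  also have "\<dots> \<le> (1 - t) * norm (z x\<^sub>1) + t * norm (z x\<^sub>2)"
    using norm_triangle_ineq[of "(1 - t) *\<^sub>R z x\<^sub>1" "t *\<^sub>R z x\<^sub>2"] t by simp
  finally show "dist (g x) (closest_point K (g x))
      \<le> (1 - t) * dist (g x\<^sub>1) (closest_point K (g x\<^sub>1)) + t * dist (g x\<^sub>2) (closest_point K (g x\<^sub>2))"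
    by (simp add: z_def dist_norm norm_minus_commute)
qed

lemma inner_closest_point_cone_residual:
  fixes K :: "'b::euclidean_space set"
  assumes "closed K" "convex_cone K"
  shows "inner (y - closest_point K y) (closest_point K y) = 0"
proof -
  have "convex K" "K \<noteq> {}"
    using assms(2) by (simp_all add: convex_cone_def)
  have "0 \<in> K"
    using assms(2) by (simp add: convex_cone_iff)
  define p where "p = closest_point K y"
  have p: "p \<in> K"
    unfolding p_def using closest_point_in_set[OF assms(1) \<open>K \<noteq> {}\<close>] .
  have obtuse: "inner (y - p) (k - p) \<le> 0" if "k \<in> K" for k
    unfolding p_def using closest_point_dot[OF \<open>convex K\<close> assms(1) that] .
  have "2 *\<^sub>R p \<in> K"
    using convex_cone_scaleR[OF assms(2) _ p] by simp
  from obtuse[OF \<open>0 \<in> K\<close>] obtuse[OF this] show ?thesis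
    unfolding p_def[symmetric] by (simp add: inner_diff_right)
qed

lemma closest_point_cone_residual_in_polar_cone:
  fixes K :: "'b::euclidean_space set"
  assumes "closed K" "convex_cone K"
  shows "y - closest_point K y \<in> polar_cone K"
proof -
  have "convex K"
    using assms(2) by (simp add: convex_cone_def)
  have "inner (y - closest_point K y) k \<le> 0" if "k \<in> K" for k
    using closest_point_dot[OF \<open>convex K\<close> assms(1) that, of y]
      inner_closest_point_cone_residual[OF assms, of y]
    by (simp add: inner_diff_right)
  then show ?thesis
    unfolding polar_cone_def by auto
qed

theorem closest_point_polar_cone:
  fixes K :: "'b::euclidean_space set"
  assumes "closed K" "convex_cone K"
  shows "closest_point (polar_cone K) y = y - closest_point K y"
proof (rule closest_point_unique[OF convex_polar_cone closed_polar_cone, symmetric])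
  define p where "p = closest_point K y"
  have "K \<noteq> {}"
    using assms(2) by (simp add: convex_cone_def)
  then have p: "p \<in> K"
    unfolding p_def using closest_point_in_set[OF assms(1)] by blast
  have orth: "inner (y - p) p = 0"
    unfolding p_def using inner_closest_point_cone_residual[OF assms] .
  show "y - closest_point K y \<in> polar_cone K"
    using closest_point_cone_residual_in_polar_cone[OF assms] .
  show "\<forall>v\<in>polar_cone K. dist y (y - closest_point K y) \<le> dist y v"
  proof
    fix v assume "v \<in> polar_cone K"
    then have "inner v p \<le> 0"
      using p unfolding polar_cone_def by auto
    \<comment> \<open>Pythagoras: p is orthogonal to the residual and makes an obtuse angle with v.\<close>
    then have "(norm p)\<^sup>2 \<le> (norm p)\<^sup>2 + (norm (y - p - v))\<^sup>2 - 2 * inner v p"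
      using zero_le_power2[of "norm (y - p - v)"] by linarith
    also have "\<dots> = (norm (p + (y - p - v)))\<^sup>2"
      using orth
      by (simp add: power2_norm_eq_inner inner_add_left inner_add_right inner_diff_left
          inner_diff_right inner_commute algebra_simps)
    finally have "norm p \<le> norm (y - v)"
      by (simp add: power2_le_iff_abs_le)
    then show "dist y (y - closest_point K y) \<le> dist y v"
      by (simp add: p_def dist_norm)
  qed
qed

theorem proposition2p1:
  fixes K :: "'b::euclidean_space set"
    and g :: "'a::euclidean_space \<Rightarrow> 'b"
  assumes "closed K" and "convex_cone K"
    and "continuous_on UNIV g"
    and "graph_convex_map K g"
  shows "convex_on UNIV (\<lambda>x. (1/2) * (norm (closest_point (polar_cone K) (g x)))\<^sup>2)"
proof -
  have "K \<noteq> {}"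
    using assms(2) by (simp add: convex_cone_def)
  have "norm (closest_point (polar_cone K) y) = dist y (closest_point K y)" for y
    unfolding closest_point_polar_cone[OF assms(1,2)] by (simp add: dist_norm)
  moreover have "convex_on UNIV (\<lambda>x. (dist (g x) (closest_point K (g x)))\<^sup>2)"
    using convex_on_dist_closest_point_graph_convex[OF assms(1) \<open>K \<noteq> {}\<close> assms(4)]
    by (rule convex_on_power2) simp
  ultimately show ?thesis
    using convex_on_cmul[of "1/2"] by simp
qed

end
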